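(* Let $\Gamma=(U\cup V,E)$ be a $3$-regular bipartite graph with bipartition $U,V$, and let $M$ be the $n\times n$ matrix described in the context. If $\Gamma$ has an odd number of perfect matchings, then $\det(M)\neq 0$.
   Context: Construction of $\hat\Gamma$: for each vertex $v$ of $\Gamma$ with neighbours $x,y,z$, there are four inner vertices $a_{v,S}$, one for each subset $S\subseteq\{x,y,z\}$ of even size (the set $I_v$), and six outer vertices $b_{v,u,0},b_{v,u,1}$ for $u\in\{x,y,z\}$ (the set $O_v$). Within the gadget, $a_{v,S}$ is adjacent to $b_{v,u,1}$ if $u\in S$ and to $b_{v,u,0}$ if $u\notin S$. For each edge $e=\{u,v\}\in E$ and $i\in\{0,1\}$ there is an edge $e_i$ joining $b_{v,u,i}$ and $b_{u,v,i}$. No other edges. Let $X=\bigcup_{v\in U}I_v\cup\bigcup_{v\in V}O_v$ and $Y=\bigcup_{v\in V}I_v\cup\bigcup_{v\in U}O_v$; all edges of $\hat\Gamma$ join $X$ to $Y$ and $|X|=|Y|=n=10|U|$. Fix arbitrary bijections $\eta:X\to[n]$ and $\eta':Y\to[n]$, and let $M$ be the $n\times n$ $\{0,1\}$-matrix (over a field of characteristic $0$, e.g. the rationals) with $M(\eta(x),\eta'(y))=1$ iff $x$ and $y$ are adjacent in $\hat\Gamma$, and $0$ otherwise. *)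

theory Defs
  imports Main "Jordan_Normal_Form.Determinant"
begin

text \<open>Vertices of the graph Gamma-hat. Inner v S is a_{v,S};
  Outer v u i is b_{v,u,i}, where the index i in {0,1} is encoded as a bool
  (False = 0, True = 1).\<close>
datatype 'a hatv = Inner 'a "'a set" | Outer 'a 'a bool

definition nbr :: "('a \<times> 'a) set \<Rightarrow> 'a \<Rightarrow> 'a set" where
  "nbr E v = {w. (v, w) \<in> E \<or> (w, v) \<in> E}"

definition bipartite_cubic :: "'a set \<Rightarrow> 'a set \<Rightarrow> ('a \<times> 'a) set \<Rightarrow> bool" where
  "bipartite_cubic U V E \<longleftrightarrow> finite U \<and> finite V \<and> U \<inter> V = {} \<and> E \<subseteq> U \<times> V \<and>
     (\<forall>v \<in> U \<union> V. card (nbr E v) = 3)"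

definition perfect_matching :: "'a set \<Rightarrow> 'a set \<Rightarrow> ('a \<times> 'a) set \<Rightarrow> ('a \<times> 'a) set \<Rightarrow> bool" where
  "perfect_matching U V E F \<longleftrightarrow> F \<subseteq> E \<and>
     (\<forall>u \<in> U. \<exists>!v. (u, v) \<in> F) \<and> (\<forall>v \<in> V. \<exists>!u. (u, v) \<in> F)"

definition inner_set :: "('a \<times> 'a) set \<Rightarrow> 'a \<Rightarrow> 'a hatv set" where
  "inner_set E v = {Inner v S | S. S \<subseteq> nbr E v \<and> even (card S)}"

definition outer_set :: "('a \<times> 'a) set \<Rightarrow> 'a \<Rightarrow> 'a hatv set" where
  "outer_set E v = {Outer v u i | u i. u \<in> nbr E v}"

definition Xset :: "'a set \<Rightarrow> 'a set \<Rightarrow> ('a \<times> 'a) set \<Rightarrow> 'a hatv set" where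
  "Xset U V E = (\<Union>v\<in>U. inner_set E v) \<union> (\<Union>v\<in>V. outer_set E v)"

definition Yset :: "'a set \<Rightarrow> 'a set \<Rightarrow> ('a \<times> 'a) set \<Rightarrow> 'a hatv set" where
  "Yset U V E = (\<Union>v\<in>V. inner_set E v) \<union> (\<Union>v\<in>U. outer_set E v)"

fun gadget_adj :: "('a \<times> 'a) set \<Rightarrow> 'a hatv \<Rightarrow> 'a hatv \<Rightarrow> bool" where
  "gadget_adj E (Inner v S) (Outer w u i) \<longleftrightarrow> v = w \<and> u \<in> nbr E v \<and> (i \<longleftrightarrow> u \<in> S)"
| "gadget_adj E _ _ \<longleftrightarrow> False"

fun link_adj :: "('a \<times> 'a) set \<Rightarrow> 'a hatv \<Rightarrow> 'a hatv \<Rightarrow> bool" where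
  "link_adj E (Outer v u i) (Outer u' v' j) \<longleftrightarrow> u' = u \<and> v' = v \<and> i = j \<and> u \<in> nbr E v"
| "link_adj E _ _ \<longleftrightarrow> False"

definition hat_adj :: "('a \<times> 'a) set \<Rightarrow> 'a hatv \<Rightarrow> 'a hatv \<Rightarrow> bool" where
  "hat_adj E x y \<longleftrightarrow> gadget_adj E x y \<or> gadget_adj E y x \<or> link_adj E x y"

end

theory Submission
  imports Defs
begin

(*
  Rows and columns of M are labelled by X and Y, so det M \<noteq> 0 says that the only
  c : Y \<rightarrow> k with (\<Sum>y adjacent to x. c y) = 0 for every x \<in> X is c = 0.
  For u \<in> U, the four rows a_{u,S} of its gadget force c(b_{u,w,1}) = c(b_{u,w,0}) and
  \<Sum>_w c(b_{u,w,0}) = 0. For v \<in> V, adding the rows b_{v,u,0} and b_{v,u,1} gives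
  \<alpha>(v) = -2 c(b_{u,v,0}), where \<alpha>(v) is the sum of c over I_v. Hence \<alpha> lies in the kernel
  of the biadjacency matrix of \<Gamma>, whose determinant is, modulo 2, the number of perfect
  matchings. So \<alpha> = 0, all c(b_{u,w,i}) vanish, and the rows b_{v,u,i} then force c = 0 on I_v.
*)

lemma mult_mat_vec_reindex:
  assumes \<eta>': "bij_betw \<eta>' Y {..<n}" and A: "A \<in> carrier_mat n n"
    and v: "v \<in> carrier_vec n" and i: "i < n"
  shows "(A *\<^sub>v v) $ i = (\<Sum>y\<in>Y. A $$ (i, \<eta>' y) * v $ \<eta>' y)"
proof -
  have "(A *\<^sub>v v) $ i = (\<Sum>j<n. A $$ (i, j) * v $ j)"
    using A v i by (simp add: scalar_prod_def lessThan_atLeast0)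
  also have "\<dots> = (\<Sum>y\<in>Y. A $$ (i, \<eta>' y) * v $ \<eta>' y)"
    using sum.reindex_bij_betw[OF \<eta>', of "\<lambda>j. A $$ (i, j) * v $ j"] by simp
  finally show ?thesis .
qed

lemma det_ne_0_iff_relabelled_kernel_trivial:
  fixes A :: "'k::idom mat"
  assumes \<eta>: "bij_betw \<eta> X {..<n}" and \<eta>': "bij_betw \<eta>' Y {..<n}" and A: "A \<in> carrier_mat n n"
  shows "det A \<noteq> 0 \<longleftrightarrow>
    (\<forall>c. (\<forall>x\<in>X. (\<Sum>y\<in>Y. A $$ (\<eta> x, \<eta>' y) * c y) = 0) \<longrightarrow> (\<forall>y\<in>Y. c y = 0))"
proof
  assume det: "det A \<noteq> 0"
  show "\<forall>c. (\<forall>x\<in>X. (\<Sum>y\<in>Y. A $$ (\<eta> x, \<eta>' y) * c y) = 0) \<longrightarrow> (\<forall>y\<in>Y. c y = 0)"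
  proof (intro allI impI ballI)
    fix c y assume ker: "\<forall>x\<in>X. (\<Sum>y\<in>Y. A $$ (\<eta> x, \<eta>' y) * c y) = 0" and y: "y \<in> Y"
    define v where "v = vec n (\<lambda>j. c (inv_into Y \<eta>' j))"
    have v: "v \<in> carrier_vec n" unfolding v_def by simp
    have v_at: "v $ \<eta>' y = c y" if "y \<in> Y" for y
    proof -
      have "\<eta>' y < n" using \<eta>' that by (auto dest: bij_betwE)
      then show ?thesis using that bij_betw_imp_inj_on[OF \<eta>'] by (simp add: v_def)
    qed
    have "A *\<^sub>v v = 0\<^sub>v n"
    proof (rule eq_vecI)
      fix i assume "i < dim_vec (0\<^sub>v n :: 'k vec)"
      then have "i \<in> \<eta> ` X" using \<eta> by (simp add: bij_betw_def)
      then obtain x where "x \<in> X" "i = \<eta> x" by blast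
      then show "(A *\<^sub>v v) $ i = 0\<^sub>v n $ i"
        using ker mult_mat_vec_reindex[OF \<eta>' A v] v_at \<open>i < _\<close> by simp
    qed (use A in simp)
    then have "v = 0\<^sub>v n" using det det_0_iff_vec_prod_zero[OF A] v by blast
    then show "c y = 0" using v_at[OF y] \<eta>' y by (auto dest: bij_betwE)
  qed
next
  assume triv: "\<forall>c. (\<forall>x\<in>X. (\<Sum>y\<in>Y. A $$ (\<eta> x, \<eta>' y) * c y) = 0) \<longrightarrow> (\<forall>y\<in>Y. c y = 0)"
  show "det A \<noteq> 0"
  proof
    assume "det A = 0"
    then obtain v where v: "v \<in> carrier_vec n" "v \<noteq> 0\<^sub>v n" "A *\<^sub>v v = 0\<^sub>v n"
      using det_0_iff_vec_prod_zero[OF A] by blast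
    have "\<forall>x\<in>X. (\<Sum>y\<in>Y. A $$ (\<eta> x, \<eta>' y) * v $ \<eta>' y) = 0"
      using mult_mat_vec_reindex[OF \<eta>' A v(1)] v(3) \<eta> by (auto dest: bij_betwE)
    then have zero: "\<forall>y\<in>Y. v $ \<eta>' y = 0" using triv[THEN spec, of "\<lambda>y. v $ \<eta>' y"] by blast
    have "v = 0\<^sub>v n"
    proof (rule eq_vecI)
      fix i assume "i < dim_vec (0\<^sub>v n :: 'k vec)"
      then have "i \<in> \<eta>' ` Y" using \<eta>' by (simp add: bij_betw_def)
      then show "v $ i = 0\<^sub>v n $ i" using zero \<open>i < _\<close> by auto
    qed (use v(1) in simp)
    then show False using v(2) by simp
  qed
qed

lemma det_indicator_mat:
  "det (mat m m (\<lambda>(i, j). if R i j then 1 else 0) :: 'k::comm_ring_1 mat) =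
     of_int (\<Sum>p | p permutes {0..<m} \<and> (\<forall>i<m. R i (p i)). sign p)"
  (is "det ?A = _")
proof -
  have prod_entries: "(\<Prod>i = 0..<m. ?A $$ (i, p i)) = (if \<forall>i<m. R i (p i) then 1 else 0)"
    if "p permutes {0..<m}" for p
  proof -
    have "(\<Prod>i = 0..<m. ?A $$ (i, p i)) = (\<Prod>i = 0..<m. if R i (p i) then 1 else 0)"
      using that by (intro prod.cong) (auto simp: permutes_in_image)
    also have "\<dots> = (if \<forall>i<m. R i (p i) then 1 else 0)"
      by (force intro: prod_zero)
    finally show ?thesis .
  qed
  have "det ?A = (\<Sum>p | p permutes {0..<m}. signof p * (\<Prod>i = 0..<m. ?A $$ (i, p i)))"
    by (rule det_def') simp
  also have "\<dots> = (\<Sum>p | p permutes {0..<m}. if \<forall>i<m. R i (p i) then signof p else 0)"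
    using prod_entries by (intro sum.cong) auto
  also have "\<dots> = of_int (\<Sum>p | p permutes {0..<m} \<and> (\<forall>i<m. R i (p i)). sign p)"
    unfolding of_int_sum by (subst sum.inter_filter[symmetric]) (simp_all add: finite_permutations)
  finally show ?thesis .
qed

lemma odd_sum_sign_iff:
  assumes "finite G"
  shows "odd (\<Sum>p\<in>G. sign p) \<longleftrightarrow> odd (card G)"
proof -
  have "(\<Sum>p\<in>G. sign p) = int (card G) + (\<Sum>p\<in>G. sign p - 1)"
    by (simp add: sum_subtractf)
  moreover have "even (\<Sum>p\<in>G. sign p - 1)"
    by (rule dvd_sum) (auto simp: sign_def)
  ultimately show ?thesis by simp
qed

lemma perfect_matching_graphE:
  assumes E: "E \<subseteq> U \<times> V" and F: "perfect_matching U V E F"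
  obtains h where "bij_betw h U V" "\<forall>u\<in>U. (u, h u) \<in> E" "F = (\<lambda>u. (u, h u)) ` U"
proof -
  have F_E: "F \<subseteq> E" and rows: "\<forall>u\<in>U. \<exists>!v. (u, v) \<in> F" and cols: "\<forall>v\<in>V. \<exists>!u. (u, v) \<in> F"
    using F unfolding perfect_matching_def by simp_all
  define h where "h u = (THE v. (u, v) \<in> F)" for u
  have F_sub: "F \<subseteq> U \<times> V" using F_E E by blast
  have h_in: "(u, h u) \<in> F" if "u \<in> U" for u
  proof -
    have "\<exists>!v. (u, v) \<in> F" using rows that by blast
    then show ?thesis unfolding h_def by (rule theI')
  qed
  have h_unique: "v = h u" if "(u, v) \<in> F" for u v
  proof -
    have "\<exists>!v. (u, v) \<in> F" using rows F_sub that by blast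
    then show ?thesis unfolding h_def using that by (simp add: the1_equality)
  qed
  have "inj_on h U"
  proof (rule inj_onI)
    fix u u' assume u: "u \<in> U" and u': "u' \<in> U" and eq: "h u = h u'"
    have "h u \<in> V" using F_sub h_in[OF u] by blast
    then have "\<exists>!w. (w, h u) \<in> F" using cols by blast
    then show "u = u'" using h_in[OF u] h_in[OF u'] eq by (metis (full_types))
  qed
  moreover have "h ` U = V"
  proof
    show "h ` U \<subseteq> V" using F_sub h_in by blast
    show "V \<subseteq> h ` U"
    proof
      fix v assume "v \<in> V"
      then obtain u where "(u, v) \<in> F" using cols by blast
      then show "v \<in> h ` U" using F_sub h_unique by blast
    qed
  qed
  moreover have "\<forall>u\<in>U. (u, h u) \<in> E" using F_E h_in by blast
  moreover have "F = (\<lambda>u. (u, h u)) ` U" using F_sub h_in h_unique by force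
  ultimately show ?thesis using that unfolding bij_betw_def by blast
qed

lemma perfect_matching_graph:
  assumes h: "bij_betw h U V" and edges: "\<forall>u\<in>U. (u, h u) \<in> E"
  shows "perfect_matching U V E ((\<lambda>u. (u, h u)) ` U)"
proof -
  have "\<exists>!u. (u, v) \<in> (\<lambda>u. (u, h u)) ` U" if "v \<in> V" for v
  proof -
    obtain u where "u \<in> U" "h u = v" using h \<open>v \<in> V\<close> by (auto simp: bij_betw_def)
    then show ?thesis using bij_betw_imp_inj_on[OF h] by (auto dest: inj_onD)
  qed
  then show ?thesis unfolding perfect_matching_def using edges by auto
qed

lemma inj_on_permutation_graph:
  assumes f: "inj_on f A" and g: "inj_on g A"
  shows "inj_on (\<lambda>p. (\<lambda>i. (f i, g (p i))) ` A) {p. p permutes A}"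
proof (rule inj_onI)
  fix p q
  assume p: "p \<in> {p. p permutes A}" and q: "q \<in> {p. p permutes A}"
    and eq: "(\<lambda>i. (f i, g (p i))) ` A = (\<lambda>i. (f i, g (q i))) ` A"
  show "p = q"
  proof
    fix i
    show "p i = q i"
    proof (cases "i \<in> A")
      case True
      then obtain j where "j \<in> A" "f i = f j" "g (p i) = g (q j)" using eq by blast
      moreover have "p i \<in> A" "q i \<in> A" using p q True by (auto simp: permutes_in_image)
      ultimately show ?thesis using True f g by (metis inj_onD)
    next
      case False
      then show ?thesis using p q by (simp add: permutes_not_in)
    qed
  qed
qed

lemma perfect_matching_permutation_graph:
  assumes f: "bij_betw f A U" and g: "bij_betw g A V" and E: "E \<subseteq> U \<times> V"
    and p: "p permutes A" and edges: "\<forall>i\<in>A. (f i, g (p i)) \<in> E"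
  shows "perfect_matching U V E ((\<lambda>i. (f i, g (p i))) ` A)"
proof -
  have f_inj: "inj_on f A" and fA: "f ` A = U" using f by (auto simp: bij_betw_def)
  define h where "h = g \<circ> p \<circ> inv_into A f"
  have "bij_betw h U V"
    unfolding h_def using bij_betw_inv_into[OF f] permutes_imp_bij[OF p] g
    by (blast intro: bij_betw_trans)
  moreover have "(\<lambda>i. (f i, g (p i))) ` A = (\<lambda>u. (u, h u)) ` U"
    unfolding h_def using f_inj fA by (force simp: inv_into_f_f)
  moreover have "\<forall>u\<in>U. (u, h u) \<in> E"
    using edges f_inj fA by (auto simp: h_def inv_into_f_f)
  ultimately show ?thesis by (metis perfect_matching_graph)
qed

lemma perfect_matching_permutationE:
  assumes f: "bij_betw f A U" and g: "bij_betw g A V" and E: "E \<subseteq> U \<times> V"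
    and F: "perfect_matching U V E F"
  obtains p where "p permutes A" "\<forall>i\<in>A. (f i, g (p i)) \<in> E" "F = (\<lambda>i. (f i, g (p i))) ` A"
proof -
  obtain h where h: "bij_betw h U V" "\<forall>u\<in>U. (u, h u) \<in> E" and F: "F = (\<lambda>u. (u, h u)) ` U"
    using perfect_matching_graphE[OF E F] by blast
  define p where "p i = (if i \<in> A then inv_into A g (h (f i)) else i)" for i
  have gp: "g (p i) = h (f i)" if "i \<in> A" for i
  proof -
    have "h (f i) \<in> g ` A" using that f g h(1) by (auto simp: bij_betw_def)
    then show ?thesis using that by (simp add: p_def f_inv_into_f)
  qed
  have "bij_betw (inv_into A g \<circ> h \<circ> f) A A"
    using bij_betw_inv_into[OF g] h(1) f by (blast intro: bij_betw_trans)
  then have "bij_betw p A A" by (rule bij_betw_cong[THEN iffD1, rotated]) (simp add: p_def)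
  then have "p permutes A" by (rule bij_imp_permutes) (simp add: p_def)
  moreover have "\<forall>i\<in>A. (f i, g (p i)) \<in> E" using gp h(2) f by (auto dest: bij_betwE)
  moreover have "F = (\<lambda>i. (f i, g (p i))) ` A" unfolding F using gp f by (force simp: bij_betw_def)
  ultimately show ?thesis using that by blast
qed

lemma bij_betw_permutations_perfect_matchings:
  assumes f: "bij_betw f A U" and g: "bij_betw g A V" and E: "E \<subseteq> U \<times> V"
  shows "bij_betw (\<lambda>p. (\<lambda>i. (f i, g (p i))) ` A)
           {p. p permutes A \<and> (\<forall>i\<in>A. (f i, g (p i)) \<in> E)} {F. perfect_matching U V E F}"
proof (rule bij_betw_imageI)
  show "inj_on (\<lambda>p. (\<lambda>i. (f i, g (p i))) ` A) {p. p permutes A \<and> (\<forall>i\<in>A. (f i, g (p i)) \<in> E)}"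
    by (rule inj_on_subset[OF inj_on_permutation_graph]) (use f g in \<open>auto simp: bij_betw_def\<close>)
  show "(\<lambda>p. (\<lambda>i. (f i, g (p i))) ` A) ` {p. p permutes A \<and> (\<forall>i\<in>A. (f i, g (p i)) \<in> E)} =
      {F. perfect_matching U V E F}"
    using perfect_matching_permutation_graph[OF f g E] perfect_matching_permutationE[OF f g E]
    by blast
qed

lemma det_biadjacency_ne_0:
  assumes f: "bij_betw f {0..<m} U" and g: "bij_betw g {0..<m} V" and E: "E \<subseteq> U \<times> V"
    and odd: "odd (card {F. perfect_matching U V E F})"
  shows "det (mat m m (\<lambda>(i, j). if (f i, g j) \<in> E then 1 else 0) :: 'k::{comm_ring_1, ring_char_0} mat) \<noteq> 0"
proof -
  define G where "G = {p. p permutes {0..<m} \<and> (\<forall>i<m. (f i, g (p i)) \<in> E)}"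
  have "card G = card {F. perfect_matching U V E F}"
    using bij_betw_same_card[OF bij_betw_permutations_perfect_matchings[OF f g E]]
    unfolding G_def by (simp add: atLeast0LessThan Ball_def)
  moreover have "finite G" unfolding G_def by (simp add: finite_permutations)
  ultimately have "odd (\<Sum>p\<in>G. sign p)" using odd odd_sum_sign_iff by metis
  then show ?thesis unfolding det_indicator_mat G_def[symmetric] by (metis dvd_0_right of_int_eq_0_iff)
qed

lemma biadjacency_kernel_trivial:
  fixes \<alpha> :: "'a \<Rightarrow> 'k::field_char_0"
  assumes U: "finite U" and V: "finite V" and E: "E \<subseteq> U \<times> V"
    and odd: "odd (card {F. perfect_matching U V E F})"
    and ker: "\<forall>u\<in>U. (\<Sum>w\<in>E `` {u}. \<alpha> w) = 0"
  shows "\<forall>v\<in>V. \<alpha> v = 0"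
proof -
  have "{F. perfect_matching U V E F} \<noteq> {}" using odd by (metis card.empty odd_card_imp_not_empty)
  then obtain h where "bij_betw h U V" using perfect_matching_graphE[OF E] by blast
  then have card_V: "card V = card U" by (simp add: bij_betw_same_card)
  define m where "m = card U"
  obtain f where f: "bij_betw f {0..<m} U" using ex_bij_betw_nat_finite[OF U] m_def by blast
  obtain g where g: "bij_betw g {0..<m} V" using ex_bij_betw_nat_finite[OF V] card_V m_def by auto
  define B :: "'k mat" where "B = mat m m (\<lambda>(i, j). if (f i, g j) \<in> E then 1 else 0)"
  define \<eta> where "\<eta> = inv_into {0..<m} f"
  define \<eta>' where "\<eta>' = inv_into {0..<m} g"
  have \<eta>: "bij_betw \<eta> U {..<m}" and \<eta>': "bij_betw \<eta>' V {..<m}"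
    unfolding \<eta>_def \<eta>'_def atLeast0LessThan[symmetric] using f g by (simp_all add: bij_betw_inv_into)
  have "\<forall>u\<in>U. (\<Sum>v\<in>V. B $$ (\<eta> u, \<eta>' v) * \<alpha> v) = 0"
  proof
    fix u assume "u \<in> U"
    have "B $$ (\<eta> u, \<eta>' v) = (if (u, v) \<in> E then 1 else 0)" if "v \<in> V" for v
      using \<eta> \<eta>' f g \<open>u \<in> U\<close> that
      by (auto simp: B_def \<eta>_def \<eta>'_def bij_betw_def f_inv_into_f dest: bij_betwE)
    then have "(\<Sum>v\<in>V. B $$ (\<eta> u, \<eta>' v) * \<alpha> v) = (\<Sum>v | v \<in> V \<and> (u, v) \<in> E. \<alpha> v)"
      using V by (auto simp: sum.inter_filter intro!: sum.cong)
    also have "{v. v \<in> V \<and> (u, v) \<in> E} = E `` {u}" using E by blast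
    finally show "(\<Sum>v\<in>V. B $$ (\<eta> u, \<eta>' v) * \<alpha> v) = 0" using ker \<open>u \<in> U\<close> by simp
  qed
  then show ?thesis
    using det_biadjacency_ne_0[OF f g E odd, where 'k = 'k] det_ne_0_iff_relabelled_kernel_trivial[OF \<eta> \<eta>', of B]
    by (simp add: B_def)
qed

definition even_subsets :: "'a set \<Rightarrow> 'a set set" where
  "even_subsets N = {S. S \<subseteq> N \<and> even (card S)}"

lemma even_subsets_three:
  assumes "x \<noteq> y" "y \<noteq> z" "x \<noteq> z"
  shows "even_subsets {x, y, z} = {{}, {x, y}, {x, z}, {y, z}}"
proof (intro equalityI subsetI)
  fix S assume "S \<in> even_subsets {x, y, z}"
  then have sub: "S \<subseteq> {x, y, z}" and ev: "even (card S)" by (simp_all add: even_subsets_def)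
  have "S = (if x \<in> S then {x} else {}) \<union> (if y \<in> S then {y} else {}) \<union> (if z \<in> S then {z} else {})"
    using sub by auto
  then show "S \<in> {{}, {x, y}, {x, z}, {y, z}}"
    using ev assms by (cases "x \<in> S"; cases "y \<in> S"; cases "z \<in> S") (simp_all add: insert_commute)
qed (use assms in \<open>auto simp: even_subsets_def\<close>)

lemma card_3_containsE:
  assumes "card N = 3" "w \<in> N"
  obtains a b where "N = {w, a, b}" "w \<noteq> a" "w \<noteq> b" "a \<noteq> b"
proof -
  have "card (N - {w}) = 2" using assms by simp
  then obtain a b where "N - {w} = {a, b}" "a \<noteq> b" by (auto simp: card_2_iff)
  then show ?thesis using that assms(2) by blast
qed

lemma even_pattern_sums_eq_0D:
  fixes s :: "'a \<Rightarrow> bool \<Rightarrow> 'k::field_char_0"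
  assumes N: "card N = 3" and sums: "\<forall>S\<in>even_subsets N. (\<Sum>w\<in>N. s w (w \<in> S)) = 0"
  shows "\<forall>w\<in>N. s w True = s w False" and "(\<Sum>w\<in>N. s w False) = 0"
proof -
  have sums_at: "s w False + s a False + s b False = 0"
      "s w True + s a True + s b False = 0"
      "s w True + s a False + s b True = 0"
      "s w False + s a True + s b True = 0"
    if "N = {w, a, b}" "w \<noteq> a" "w \<noteq> b" "a \<noteq> b" for w a b
    using sums that even_subsets_three[OF that(2,4,3)] by (simp_all add: add.assoc)
  show "\<forall>w\<in>N. s w True = s w False"
  proof
    fix w assume "w \<in> N"
    then obtain a b where "N = {w, a, b}" "w \<noteq> a" "w \<noteq> b" "a \<noteq> b"
      using N card_3_containsE by metis
    note e = sums_at[OF this]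
    have "2 * (s w True - s w False) = (s w True + s a True + s b False) + (s w True + s a False + s b True)
        - (s w False + s a False + s b False) - (s w False + s a True + s b True)"
      by (simp add: algebra_simps)
    then show "s w True = s w False" using e by simp
  qed
  obtain w where "w \<in> N" using N by fastforce
  then obtain a b where "N = {w, a, b}" "w \<noteq> a" "w \<noteq> b" "a \<noteq> b"
    using N card_3_containsE by metis
  then show "(\<Sum>w\<in>N. s w False) = 0" using sums_at(1) by (simp add: add.assoc)
qed

lemma even_subset_sums_eq_0D:
  fixes t :: "'a set \<Rightarrow> 'k::field_char_0"
  assumes N: "card N = 3"
    and sums: "\<forall>u\<in>N. \<forall>i. (\<Sum>T | T \<in> even_subsets N \<and> (i \<longleftrightarrow> u \<in> T). t T) = 0"
  shows "\<forall>T\<in>even_subsets N. t T = 0"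
proof -
  obtain x y z where N_eq: "N = {x, y, z}" and d: "x \<noteq> y" "y \<noteq> z" "x \<noteq> z"
    using N by (auto simp: card_3_iff)
  have even_N: "even_subsets N = {{}, {x, y}, {x, z}, {y, z}}"
    unfolding N_eq using even_subsets_three[OF d] .
  have filtered: "(\<Sum>T\<in>{{}, {x, y}, {x, z}, {y, z}}. if (i \<longleftrightarrow> u \<in> T) then t T else 0) = 0"
    if "u \<in> N" for u i
    using sums that unfolding even_N by (simp add: sum.inter_filter[symmetric])
  have "t {} + t {y, z} = 0" using filtered[of x False] d by (simp add: N_eq doubleton_eq_iff)
  moreover have "t {} + t {x, z} = 0" using filtered[of y False] d by (simp add: N_eq doubleton_eq_iff)
  moreover have "t {} + t {x, y} = 0" using filtered[of z False] d by (simp add: N_eq doubleton_eq_iff)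
  moreover have "t {x, y} + t {x, z} = 0" using filtered[of x True] d by (simp add: N_eq doubleton_eq_iff)
  moreover have "2 * t {} = (t {} + t {x, z}) + (t {} + t {x, y}) - (t {x, y} + t {x, z})"
    by (simp add: algebra_simps)
  ultimately show ?thesis unfolding even_N by (simp add: add_eq_0_iff2)
qed

lemma nbr_sym: "w \<in> nbr E u \<longleftrightarrow> u \<in> nbr E w"
  unfolding nbr_def by auto

lemma nbr_eq_Image:
  assumes "E \<subseteq> U \<times> V" "U \<inter> V = {}" "u \<in> U"
  shows "nbr E u = E `` {u}"
  using assms unfolding nbr_def by blast

lemma nbr_subset_right:
  assumes "E \<subseteq> U \<times> V" "U \<inter> V = {}" "u \<in> U"
  shows "nbr E u \<subseteq> V"
  using assms unfolding nbr_def by blast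

lemma nbr_subset_left:
  assumes "E \<subseteq> U \<times> V" "U \<inter> V = {}" "v \<in> V"
  shows "nbr E v \<subseteq> U"
  using assms unfolding nbr_def by blast

lemma bipartite_cubic_finite_nbr:
  assumes "bipartite_cubic U V E" "w \<in> U \<union> V"
  shows "finite (nbr E w)"
  using assms by (intro card_ge_0_finite) (simp add: bipartite_cubic_def)

lemma inner_set_eq: "inner_set E v = Inner v ` even_subsets (nbr E v)"
  unfolding inner_set_def even_subsets_def by auto

lemma mem_Xset:
  "Inner w T \<in> Xset U V E \<longleftrightarrow> w \<in> U \<and> T \<in> even_subsets (nbr E w)"
  "Outer w u i \<in> Xset U V E \<longleftrightarrow> w \<in> V \<and> u \<in> nbr E w"
  unfolding Xset_def inner_set_eq outer_set_def by auto

lemma mem_Yset: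
  "Inner w T \<in> Yset U V E \<longleftrightarrow> w \<in> V \<and> T \<in> even_subsets (nbr E w)"
  "Outer w u i \<in> Yset U V E \<longleftrightarrow> w \<in> U \<and> u \<in> nbr E w"
  unfolding Yset_def inner_set_eq outer_set_def by auto

lemma hat_nbhd_Inner:
  assumes "u \<in> U"
  shows "{y \<in> Yset U V E. hat_adj E (Inner u S) y} = (\<lambda>w. Outer u w (w \<in> S)) ` nbr E u"
proof (rule Set.set_eqI)
  fix y show "y \<in> {y \<in> Yset U V E. hat_adj E (Inner u S) y} \<longleftrightarrow> y \<in> (\<lambda>w. Outer u w (w \<in> S)) ` nbr E u"
    using assms by (cases y) (auto simp: hat_adj_def mem_Yset)
qed

lemma hat_nbhd_Outer:
  assumes "E \<subseteq> U \<times> V" "U \<inter> V = {}" "v \<in> V" "u \<in> nbr E v"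
  shows "{y \<in> Yset U V E. hat_adj E (Outer v u i) y} =
    insert (Outer u v i) (Inner v ` {T \<in> even_subsets (nbr E v). i \<longleftrightarrow> u \<in> T})"
proof (rule Set.set_eqI)
  have "u \<in> U" using nbr_subset_left[OF assms(1-3)] assms(4) by blast
  fix y show "y \<in> {y \<in> Yset U V E. hat_adj E (Outer v u i) y} \<longleftrightarrow>
      y \<in> insert (Outer u v i) (Inner v ` {T \<in> even_subsets (nbr E v). i \<longleftrightarrow> u \<in> T})"
    using assms \<open>u \<in> U\<close> by (cases y) (auto simp: hat_adj_def mem_Yset nbr_sym)
qed

lemma sum_hat_nbhd_Inner:
  assumes "u \<in> U" "finite (nbr E u)"
  shows "(\<Sum>y | y \<in> Yset U V E \<and> hat_adj E (Inner u S) y. c y) = (\<Sum>w\<in>nbr E u. c (Outer u w (w \<in> S)))"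
proof -
  have "inj_on (\<lambda>w. Outer u w (w \<in> S)) (nbr E u)" by (rule inj_onI) simp
  then show ?thesis unfolding hat_nbhd_Inner[OF assms(1)] by (simp add: sum.reindex)
qed

lemma sum_hat_nbhd_Outer:
  assumes "E \<subseteq> U \<times> V" "U \<inter> V = {}" "v \<in> V" "u \<in> nbr E v" "finite (nbr E v)"
  shows "(\<Sum>y | y \<in> Yset U V E \<and> hat_adj E (Outer v u i) y. c y) =
    c (Outer u v i) + (\<Sum>T | T \<in> even_subsets (nbr E v) \<and> (i \<longleftrightarrow> u \<in> T). c (Inner v T))"
proof -
  define A where "A = {T \<in> even_subsets (nbr E v). i \<longleftrightarrow> u \<in> T}"
  have "finite A" using assms(5) by (simp add: A_def even_subsets_def)
  have "sum c (insert (Outer u v i) (Inner v ` A)) = c (Outer u v i) + sum c (Inner v ` A)"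
    using \<open>finite A\<close> by (intro sum.insert) auto
  also have "sum c (Inner v ` A) = (\<Sum>T\<in>A. c (Inner v T))"
    by (rule sum.reindex_cong[of "Inner v"]) (auto intro: inj_onI)
  finally show ?thesis
    unfolding hat_nbhd_Outer[OF assms(1-4)] A_def by simp
qed

lemma hat_kernel_Outer_values:
  fixes c :: "'a hatv \<Rightarrow> 'k::field_char_0"
  assumes cubic: "bipartite_cubic U V E"
    and ker: "\<forall>x\<in>Xset U V E. (\<Sum>y | y \<in> Yset U V E \<and> hat_adj E x y. c y) = 0"
    and u: "u \<in> U"
  shows "\<forall>w\<in>nbr E u. c (Outer u w True) = c (Outer u w False)"
    and "(\<Sum>w\<in>nbr E u. c (Outer u w False)) = 0"
proof -
  have rows: "\<forall>S\<in>even_subsets (nbr E u). (\<Sum>w\<in>nbr E u. c (Outer u w (w \<in> S))) = 0"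
  proof
    fix S assume "S \<in> even_subsets (nbr E u)"
    then have "Inner u S \<in> Xset U V E" using u by (simp add: mem_Xset)
    then have "(\<Sum>y | y \<in> Yset U V E \<and> hat_adj E (Inner u S) y. c y) = 0" using ker by blast
    then show "(\<Sum>w\<in>nbr E u. c (Outer u w (w \<in> S))) = 0"
      unfolding sum_hat_nbhd_Inner[OF u bipartite_cubic_finite_nbr[OF cubic UnI1[OF u]]] .
  qed
  have "card (nbr E u) = 3" using cubic u by (simp add: bipartite_cubic_def)
  note pattern_sums = even_pattern_sums_eq_0D[where s = "\<lambda>w i. c (Outer u w i)", OF this rows]
  show "\<forall>w\<in>nbr E u. c (Outer u w True) = c (Outer u w False)" using pattern_sums(1) by simp
  show "(\<Sum>w\<in>nbr E u. c (Outer u w False)) = 0" using pattern_sums(2) by simp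
qed

lemma hat_kernel_Outer_row:
  fixes c :: "'a hatv \<Rightarrow> 'k::field_char_0"
  assumes cubic: "bipartite_cubic U V E"
    and ker: "\<forall>x\<in>Xset U V E. (\<Sum>y | y \<in> Yset U V E \<and> hat_adj E x y. c y) = 0"
    and v: "v \<in> V" and u: "u \<in> nbr E v"
  shows "c (Outer u v i) + (\<Sum>T | T \<in> even_subsets (nbr E v) \<and> (i \<longleftrightarrow> u \<in> T). c (Inner v T)) = 0"
proof -
  have E: "E \<subseteq> U \<times> V" and disj: "U \<inter> V = {}" using cubic by (simp_all add: bipartite_cubic_def)
  have "Outer v u i \<in> Xset U V E" using v u by (simp add: mem_Xset)
  then have "(\<Sum>y | y \<in> Yset U V E \<and> hat_adj E (Outer v u i) y. c y) = 0" using ker by blast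
  then show ?thesis
    unfolding sum_hat_nbhd_Outer[OF E disj v u bipartite_cubic_finite_nbr[OF cubic UnI2[OF v]]] .
qed

lemma hat_kernel_Inner_sum:
  fixes c :: "'a hatv \<Rightarrow> 'k::field_char_0"
  assumes cubic: "bipartite_cubic U V E"
    and ker: "\<forall>x\<in>Xset U V E. (\<Sum>y | y \<in> Yset U V E \<and> hat_adj E x y. c y) = 0"
    and v: "v \<in> V" and u: "u \<in> nbr E v"
  shows "(\<Sum>T\<in>even_subsets (nbr E v). c (Inner v T)) = - 2 * c (Outer u v False)"
proof -
  let ?S = "even_subsets (nbr E v)"
  have E: "E \<subseteq> U \<times> V" and disj: "U \<inter> V = {}" using cubic by (simp_all add: bipartite_cubic_def)
  have "finite ?S" using bipartite_cubic_finite_nbr[OF cubic] v by (simp add: even_subsets_def)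
  then have "(\<Sum>T\<in>?S. c (Inner v T)) = (\<Sum>T\<in>?S \<inter> {T. u \<in> T}. c (Inner v T)) + (\<Sum>T\<in>?S - {T. u \<in> T}. c (Inner v T))"
    by (rule sum.Int_Diff)
  also have "\<dots> = (\<Sum>T | T \<in> ?S \<and> (True \<longleftrightarrow> u \<in> T). c (Inner v T))
      + (\<Sum>T | T \<in> ?S \<and> (False \<longleftrightarrow> u \<in> T). c (Inner v T))"
    by (simp add: Int_def set_diff_eq)
  also have "\<dots> = - c (Outer u v True) - c (Outer u v False)"
    using hat_kernel_Outer_row[where i = True, OF cubic ker v u]
      hat_kernel_Outer_row[where i = False, OF cubic ker v u]
    by (simp add: add_eq_0_iff)
  also have "c (Outer u v True) = c (Outer u v False)"
    using hat_kernel_Outer_values(1)[OF cubic ker] nbr_subset_left[OF E disj v] u nbr_sym[THEN iffD1, OF u]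
    by blast
  finally show ?thesis by simp
qed

lemma hat_kernel_trivial:
  fixes c :: "'a hatv \<Rightarrow> 'k::field_char_0"
  assumes cubic: "bipartite_cubic U V E"
    and odd: "odd (card {F. perfect_matching U V E F})"
    and ker: "\<forall>x\<in>Xset U V E. (\<Sum>y | y \<in> Yset U V E \<and> hat_adj E x y. c y) = 0"
  shows "\<forall>y\<in>Yset U V E. c y = 0"
proof -
  have U: "finite U" and V: "finite V" and disj: "U \<inter> V = {}" and E: "E \<subseteq> U \<times> V"
    and deg: "\<And>w. w \<in> U \<union> V \<Longrightarrow> card (nbr E w) = 3"
    using cubic unfolding bipartite_cubic_def by auto
  have swap_V: "u \<in> U" "v \<in> nbr E u" if "v \<in> V" "u \<in> nbr E v" for u v
    using nbr_subset_left[OF E disj that(1)] that(2) nbr_sym[THEN iffD1, OF that(2)] by blast+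
  have swap_U: "w \<in> V" "u \<in> nbr E w" if "u \<in> U" "w \<in> nbr E u" for u w
    using nbr_subset_right[OF E disj that(1)] that(2) nbr_sym[THEN iffD1, OF that(2)] by blast+
  define \<alpha> where "\<alpha> v = (\<Sum>T\<in>even_subsets (nbr E v). c (Inner v T))" for v
  note \<alpha>_Outer = hat_kernel_Inner_sum[OF cubic ker, folded \<alpha>_def]
  have "\<forall>u\<in>U. (\<Sum>w\<in>E `` {u}. \<alpha> w) = 0"
  proof
    fix u assume u: "u \<in> U"
    have "(\<Sum>w\<in>nbr E u. \<alpha> w) = (\<Sum>w\<in>nbr E u. - 2 * c (Outer u w False))"
      using \<alpha>_Outer swap_U[OF u] by (intro sum.cong) simp_all
    then show "(\<Sum>w\<in>E `` {u}. \<alpha> w) = 0"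
      using hat_kernel_Outer_values(2)[OF cubic ker u] nbr_eq_Image[OF E disj u]
      by (simp add: sum_negf sum_distrib_left[symmetric])
  qed
  then have \<alpha>_0: "\<forall>v\<in>V. \<alpha> v = 0" by (rule biadjacency_kernel_trivial[OF U V E odd])
  have Outer_0: "c (Outer u w i) = 0" if "u \<in> U" "w \<in> nbr E u" for u w i
    using \<alpha>_Outer[OF swap_U[OF that]] \<alpha>_0 swap_U(1)[OF that]
      hat_kernel_Outer_values(1)[OF cubic ker that(1)] that(2)
    by (cases i) auto
  have Inner_0: "c (Inner v T) = 0" if "v \<in> V" "T \<in> even_subsets (nbr E v)" for v T
  proof -
    have "\<forall>u\<in>nbr E v. \<forall>i. (\<Sum>T | T \<in> even_subsets (nbr E v) \<and> (i \<longleftrightarrow> u \<in> T). c (Inner v T)) = 0"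
      using hat_kernel_Outer_row[OF cubic ker that(1)] Outer_0[OF swap_V[OF that(1)]] by simp
    then show ?thesis
      using even_subset_sums_eq_0D[where t = "\<lambda>T. c (Inner v T)", OF deg] that by blast
  qed
  show ?thesis
  proof
    fix y assume "y \<in> Yset U V E"
    then show "c y = 0" using Outer_0 Inner_0 by (cases y) (auto simp: mem_Yset)
  qed
qed

theorem mainTheorem6:
  fixes U V :: "'a set" and E :: "('a \<times> 'a) set"
    and \<eta> \<eta>' :: "'a hatv \<Rightarrow> nat" and n :: nat
    and M :: "'k::field_char_0 mat"
  assumes "bipartite_cubic U V E"
    and "odd (card {F. perfect_matching U V E F})"
    and "n = 10 * card U"
    and "bij_betw \<eta> (Xset U V E) {..<n}"
    and "bij_betw \<eta>' (Yset U V E) {..<n}"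
    and "M \<in> carrier_mat n n"
    and "\<forall>x \<in> Xset U V E. \<forall>y \<in> Yset U V E.
           M $$ (\<eta> x, \<eta>' y) = (if hat_adj E x y then 1 else 0)"
  shows "det M \<noteq> 0"
  unfolding det_ne_0_iff_relabelled_kernel_trivial[OF assms(4-6)]
proof (intro allI impI)
  fix c :: "'a hatv \<Rightarrow> 'k"
  assume ker: "\<forall>x\<in>Xset U V E. (\<Sum>y\<in>Yset U V E. M $$ (\<eta> x, \<eta>' y) * c y) = 0"
  have "finite (Yset U V E)" using assms(5) bij_betw_finite by blast
  then have "(\<Sum>y\<in>Yset U V E. M $$ (\<eta> x, \<eta>' y) * c y) = (\<Sum>y | y \<in> Yset U V E \<and> hat_adj E x y. c y)"
    if "x \<in> Xset U V E" for x
    using assms(7) that by (auto simp: sum.inter_filter intro!: sum.cong)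
  then show "\<forall>y\<in>Yset U V E. c y = 0"
    using ker by (intro hat_kernel_trivial[OF assms(1,2)]) simp
qed

end
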